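(* Let $\pi$ be any policy. Then for every state $s\in\mathcal S$, $$g^\pi(s)\;\le\;V^{\pi}(s)-V^{\pi^*}(s)\;\le\;(1-\gamma)^{-1}\max_{s'\in\mathcal S} g^{\pi}(s').$$
   Context: An infinite-horizon discounted MDP is given by a finite state space $\mathcal S$, a finite action space $\mathcal A$, transition probabilities $\mathcal P(s'\mid s,a)$, a cost $c:\mathcal S\times\mathcal A\to\mathbb R$ and a discount factor $\gamma\in[0,1)$. $\Delta_{|\mathcal A|}$ denotes the probability simplex over $\mathcal A$. A (feasible) policy $\pi$ assigns to each $s$ a distribution $\pi(\cdot\mid s)\in\Delta_{|\mathcal A|}$. For each state $s$, $p\mapsto h^{p}(s)$ is a closed convex function on $\Delta_{|\mathcal A|}$ (the regularizer). The value functions are $V^\pi(s)=\mathbb E\big[\sum_{t\ge0}\gamma^t\,(c(s_t,a_t)+h^{\pi(\cdot\mid s_t)}(s_t))\mid s_0=s,\ a_t\sim\pi(\cdot\mid s_t),\ s_{t+1}\sim\mathcal P(\cdot\mid s_t,a_t)\big]$ and $Q^\pi(s,a)$ is defined by the same expression with the additional condition $a_0=a$. $\pi^*$ denotes an optimal policy, i.e. $V^{\pi^*}(s)\le V^\pi(s)$ for all policies $\pi$ and all $s$ (assumed to exist). For $p\in\Delta_{|\mathcal A|}$ the advantage function is $\psi^\pi(s,p):=\langle Q^\pi(s,\cdot),p\rangle-V^\pi(s)+h^{p}(s)-h^{\pi(\cdot\mid s)}(s)$, and the advantage gap function is $g^\pi(s):=\max_{p\in\Delta_{|\mathcal A|}}\{-\psi^\pi(s,p)\}$.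 *)

theory Defs
  imports "HOL-Analysis.Analysis"
begin

definition act_simplex :: "('a::finite \<Rightarrow> real) set" where
  "act_simplex = {p. (\<forall>a. 0 \<le> p a) \<and> sum p UNIV = 1}"

definition policy :: "('s \<Rightarrow> 'a::finite \<Rightarrow> real) \<Rightarrow> bool" where
  "policy \<pi> \<longleftrightarrow> (\<forall>s. \<pi> s \<in> act_simplex)"

definition stochastic :: "('s::finite \<Rightarrow> 'a \<Rightarrow> 's \<Rightarrow> real) \<Rightarrow> bool" where
  "stochastic P \<longleftrightarrow> (\<forall>s a. (\<forall>s'. 0 \<le> P s a s') \<and> (\<Sum>s'\<in>UNIV. P s a s') = 1)"

text \<open>Closed convex function on the act_simplex (extended by +infinity outside):
  convex on the act_simplex with closed epigraph.\<close>
definition closed_convex_on_simplex :: "(('a::finite \<Rightarrow> real) \<Rightarrow> real) \<Rightarrow> bool" where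
  "closed_convex_on_simplex f \<longleftrightarrow>
     (\<forall>p\<in>act_simplex. \<forall>q\<in>act_simplex. \<forall>u::real. 0 \<le> u \<longrightarrow> u \<le> 1 \<longrightarrow>
        f (\<lambda>a. u * p a + (1 - u) * q a) \<le> u * f p + (1 - u) * f q) \<and> closed {(p, t). p \<in> act_simplex \<and> f p \<le> t}"

definition Ppol :: "('s::finite \<Rightarrow> 'a::finite \<Rightarrow> 's \<Rightarrow> real) \<Rightarrow> ('s \<Rightarrow> 'a \<Rightarrow> real) \<Rightarrow> 's \<Rightarrow> 's \<Rightarrow> real" where
  "Ppol P \<pi> s s' = (\<Sum>a\<in>UNIV. \<pi> s a * P s a s')"

fun dist_t :: "('s::finite \<Rightarrow> 'a::finite \<Rightarrow> 's \<Rightarrow> real) \<Rightarrow> ('s \<Rightarrow> 'a \<Rightarrow> real) \<Rightarrow> nat \<Rightarrow> 's \<Rightarrow> 's \<Rightarrow> real" where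
  "dist_t P \<pi> 0 s s' = (if s' = s then 1 else 0)"
| "dist_t P \<pi> (Suc t) s s'' = (\<Sum>s'\<in>UNIV. dist_t P \<pi> t s s' * Ppol P \<pi> s' s'')"

definition cpol :: "('s \<Rightarrow> 'a::finite \<Rightarrow> real) \<Rightarrow> ('s \<Rightarrow> ('a \<Rightarrow> real) \<Rightarrow> real) \<Rightarrow> ('s \<Rightarrow> 'a \<Rightarrow> real) \<Rightarrow> 's \<Rightarrow> real" where
  "cpol c h \<pi> s = (\<Sum>a\<in>UNIV. \<pi> s a * c s a) + h s (\<pi> s)"

definition Vf :: "('s::finite \<Rightarrow> 'a::finite \<Rightarrow> 's \<Rightarrow> real) \<Rightarrow> ('s \<Rightarrow> 'a \<Rightarrow> real) \<Rightarrow> ('s \<Rightarrow> ('a \<Rightarrow> real) \<Rightarrow> real) \<Rightarrow> real \<Rightarrow> ('s \<Rightarrow> 'a \<Rightarrow> real) \<Rightarrow> 's \<Rightarrow> real" where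
  "Vf P c h \<gamma> \<pi> s = (\<Sum>t. \<gamma> ^ t * (\<Sum>s'\<in>UNIV. dist_t P \<pi> t s s' * cpol c h \<pi> s'))"

text \<open>Q^pi(s,a): same expectation with a_0 = a. The t = 0 term is c(s,a) + h^{pi(.|s)}(s);
  for t >= 1 the state s_t has distribution sum_{s1} P(s1|s,a) dist_{t-1}(s1, .).\<close>
definition Qf :: "('s::finite \<Rightarrow> 'a::finite \<Rightarrow> 's \<Rightarrow> real) \<Rightarrow> ('s \<Rightarrow> 'a \<Rightarrow> real) \<Rightarrow> ('s \<Rightarrow> ('a \<Rightarrow> real) \<Rightarrow> real) \<Rightarrow> real \<Rightarrow> ('s \<Rightarrow> 'a \<Rightarrow> real) \<Rightarrow> 's \<Rightarrow> 'a \<Rightarrow> real" where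
  "Qf P c h \<gamma> \<pi> s a = c s a + h s (\<pi> s) +
     (\<Sum>t. \<gamma> ^ Suc t * (\<Sum>s1\<in>UNIV. P s a s1 * (\<Sum>s'\<in>UNIV. dist_t P \<pi> t s1 s' * cpol c h \<pi> s')))"

definition adv_psi :: "('s::finite \<Rightarrow> 'a::finite \<Rightarrow> 's \<Rightarrow> real) \<Rightarrow> ('s \<Rightarrow> 'a \<Rightarrow> real) \<Rightarrow> ('s \<Rightarrow> ('a \<Rightarrow> real) \<Rightarrow> real) \<Rightarrow> real \<Rightarrow> ('s \<Rightarrow> 'a \<Rightarrow> real) \<Rightarrow> 's \<Rightarrow> ('a \<Rightarrow> real) \<Rightarrow> real" where
  "adv_psi P c h \<gamma> \<pi> s p = (\<Sum>a\<in>UNIV. Qf P c h \<gamma> \<pi> s a * p a) - Vf P c h \<gamma> \<pi> s + h s p - h s (\<pi> s)"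

text \<open>Advantage adv_gap function g^pi(s) = max_{p in act_simplex} -adv_psi^pi(s,p)
  (the maximum is attained since h(s) is closed; written as Sup).\<close>
definition adv_gap :: "('s::finite \<Rightarrow> 'a::finite \<Rightarrow> 's \<Rightarrow> real) \<Rightarrow> ('s \<Rightarrow> 'a \<Rightarrow> real) \<Rightarrow> ('s \<Rightarrow> ('a \<Rightarrow> real) \<Rightarrow> real) \<Rightarrow> real \<Rightarrow> ('s \<Rightarrow> 'a \<Rightarrow> real) \<Rightarrow> 's \<Rightarrow> real" where
  "adv_gap P c h \<gamma> \<pi> s = (SUP p\<in>act_simplex. - adv_psi P c h \<gamma> \<pi> s p)"

end

theory Submission
  imports Defs
begin

(* The performance difference lemma expresses V^pi'(s) - V^pi(s) as the discounted expectation,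
   along the Markov chain of pi' started at s, of psi^pi(s_t, pi'(s_t)).
   For pi' = pi* the integrand is at least -g^pi(s_t) >= -max g^pi, which gives the upper bound.
   For the policy pi' that agrees with pi except that it plays p at s, the integrand vanishes
   outside s; if psi^pi(s,p) <= 0, already the visit at time 0 gives
   V^pi'(s) - V^pi(s) <= psi^pi(s,p), and optimality of pi* turns this into
   -psi^pi(s,p) <= V^pi(s) - V^pi*(s). *)

lemma Ppol_nonneg:
  assumes "stochastic P" "policy \<pi>"
  shows "0 \<le> Ppol P \<pi> s s'"
  using assms unfolding Ppol_def stochastic_def policy_def act_simplex_def
  by (auto intro!: sum_nonneg)

lemma sum_Ppol:
  assumes "stochastic P" "policy \<pi>"
  shows "(\<Sum>s'\<in>UNIV. Ppol P \<pi> s s') = 1"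
proof -
  have "(\<Sum>s'\<in>UNIV. Ppol P \<pi> s s') = (\<Sum>a\<in>UNIV. \<pi> s a * (\<Sum>s'\<in>UNIV. P s a s'))"
    unfolding Ppol_def sum_distrib_left by (rule sum.swap)
  also have "\<dots> = 1"
    using assms unfolding stochastic_def policy_def act_simplex_def by simp
  finally show ?thesis .
qed

lemma dist_t_nonneg:
  assumes "stochastic P" "policy \<pi>"
  shows "0 \<le> dist_t P \<pi> t s s'"
  by (induction t arbitrary: s') (auto intro!: sum_nonneg mult_nonneg_nonneg Ppol_nonneg[OF assms])

lemma sum_dist_t:
  assumes "stochastic P" "policy \<pi>"
  shows "(\<Sum>s'\<in>UNIV. dist_t P \<pi> t s s') = 1"
proof (induction t)
  case (Suc t)
  have "(\<Sum>s''\<in>UNIV. dist_t P \<pi> (Suc t) s s'')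
      = (\<Sum>s'\<in>UNIV. dist_t P \<pi> t s s' * (\<Sum>s''\<in>UNIV. Ppol P \<pi> s' s''))"
    unfolding dist_t.simps sum_distrib_left by (rule sum.swap)
  with Suc show ?case by (simp add: sum_Ppol[OF assms])
qed simp

lemma dist_t_le_1:
  assumes "stochastic P" "policy \<pi>"
  shows "dist_t P \<pi> t s s' \<le> 1"
  using member_le_sum[of s' UNIV "dist_t P \<pi> t s"]
  by (simp add: dist_t_nonneg[OF assms] sum_dist_t[OF assms])

lemma dist_t_Suc_first:
  "dist_t P \<pi> (Suc t) s s'' = (\<Sum>s1\<in>UNIV. Ppol P \<pi> s s1 * dist_t P \<pi> t s1 s'')"
proof (induction t arbitrary: s'')
  case 0
  show ?case by (simp add: if_distrib if_distribR cong: if_cong)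
next
  case (Suc t)
  have "dist_t P \<pi> (Suc (Suc t)) s s''
      = (\<Sum>s'\<in>UNIV. (\<Sum>s1\<in>UNIV. Ppol P \<pi> s s1 * dist_t P \<pi> t s1 s') * Ppol P \<pi> s' s'')"
    using Suc by simp
  also have "\<dots> = (\<Sum>s1\<in>UNIV. Ppol P \<pi> s s1 * dist_t P \<pi> (Suc t) s1 s'')"
    unfolding dist_t.simps sum_distrib_right sum_distrib_left
    by (subst sum.swap) (simp add: mult.assoc)
  finally show ?case .
qed

definition expect_t ::
    "('s::finite \<Rightarrow> 'a::finite \<Rightarrow> 's \<Rightarrow> real) \<Rightarrow> ('s \<Rightarrow> 'a \<Rightarrow> real) \<Rightarrow> nat \<Rightarrow> ('s \<Rightarrow> real) \<Rightarrow> 's \<Rightarrow> real"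
  where
  "expect_t P \<pi> t f s = (\<Sum>s'\<in>UNIV. dist_t P \<pi> t s s' * f s')"

lemma expect_t_0 [simp]: "expect_t P \<pi> 0 f s = f s"
  by (simp add: expect_t_def of_bool_def[symmetric])

lemma expect_t_Suc:
  "expect_t P \<pi> (Suc t) f s = (\<Sum>s1\<in>UNIV. Ppol P \<pi> s s1 * expect_t P \<pi> t f s1)"
  unfolding expect_t_def dist_t_Suc_first sum_distrib_left sum_distrib_right
  by (subst sum.swap) (simp add: mult.assoc)

lemma expect_t_Suc':
  "expect_t P \<pi> (Suc t) f s = expect_t P \<pi> t (\<lambda>s'. \<Sum>s1\<in>UNIV. Ppol P \<pi> s' s1 * f s1) s"
  unfolding expect_t_def dist_t.simps sum_distrib_left sum_distrib_right
  by (subst sum.swap) (simp add: mult.assoc)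

lemma expect_t_add: "expect_t P \<pi> t (\<lambda>x. f x + g x) s = expect_t P \<pi> t f s + expect_t P \<pi> t g s"
  unfolding expect_t_def by (simp add: distrib_left sum.distrib)

lemma expect_t_diff: "expect_t P \<pi> t (\<lambda>x. f x - g x) s = expect_t P \<pi> t f s - expect_t P \<pi> t g s"
  unfolding expect_t_def by (simp add: right_diff_distrib sum_subtractf)

lemma expect_t_cmult: "expect_t P \<pi> t (\<lambda>x. k * f x) s = k * expect_t P \<pi> t f s"
  unfolding expect_t_def by (simp add: sum_distrib_left mult_ac)

lemma expect_t_mono:
  assumes "stochastic P" "policy \<pi>" "\<And>x. f x \<le> g x"
  shows "expect_t P \<pi> t f s \<le> expect_t P \<pi> t g s"
  unfolding expect_t_def using assms
  by (auto intro!: sum_mono mult_left_mono dist_t_nonneg)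

lemma expect_t_const:
  assumes "stochastic P" "policy \<pi>"
  shows "expect_t P \<pi> t (\<lambda>_. k) s = k"
  unfolding expect_t_def by (simp add: sum_distrib_right[symmetric] sum_dist_t[OF assms])

lemma abs_expect_t_le:
  assumes "stochastic P" "policy \<pi>"
  shows "\<bar>expect_t P \<pi> t f s\<bar> \<le> (\<Sum>s'\<in>UNIV. \<bar>f s'\<bar>)"
proof -
  have "\<bar>expect_t P \<pi> t f s\<bar> \<le> (\<Sum>s'\<in>UNIV. dist_t P \<pi> t s s' * \<bar>f s'\<bar>)"
    unfolding expect_t_def
    using sum_abs[of "\<lambda>s'. dist_t P \<pi> t s s' * f s'" UNIV]
    by (simp add: abs_mult dist_t_nonneg[OF assms])
  also have "\<dots> \<le> (\<Sum>s'\<in>UNIV. \<bar>f s'\<bar>)"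
    using dist_t_le_1[OF assms] dist_t_nonneg[OF assms]
    by (intro sum_mono mult_left_le_one_le) simp_all
  finally show ?thesis .
qed

definition disc_value ::
    "('s::finite \<Rightarrow> 'a::finite \<Rightarrow> 's \<Rightarrow> real) \<Rightarrow> real \<Rightarrow> ('s \<Rightarrow> 'a \<Rightarrow> real) \<Rightarrow> ('s \<Rightarrow> real) \<Rightarrow> 's \<Rightarrow> real"
  where
  "disc_value P \<gamma> \<pi> f s = (\<Sum>t. \<gamma> ^ t * expect_t P \<pi> t f s)"

lemma Vf_eq_disc_value: "Vf P c h \<gamma> \<pi> s = disc_value P \<gamma> \<pi> (cpol c h \<pi>) s"
  by (simp add: Vf_def disc_value_def expect_t_def)

lemma act_simplex_nonempty: "act_simplex \<noteq> {}"
proof -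
  have "(\<lambda>_. 1 / real CARD('a)) \<in> (act_simplex :: ('a::finite \<Rightarrow> real) set)"
    unfolding act_simplex_def by simp
  then show ?thesis by blast
qed

locale discounted_mdp =
  fixes P :: "'s::finite \<Rightarrow> 'a::finite \<Rightarrow> 's \<Rightarrow> real" and \<gamma> :: real
  assumes stochastic: "stochastic P"
    and discount_nonneg: "0 \<le> \<gamma>" and discount_less_1: "\<gamma> < 1"
begin

lemma summable_geometric_discount: "summable (\<lambda>t. \<gamma> ^ t)"
  using discount_nonneg discount_less_1 by (intro summable_geometric) simp

lemma summable_disc_value:
  assumes "policy \<pi>"
  shows "summable (\<lambda>t. \<gamma> ^ t * expect_t P \<pi> t f s)"
proof (rule summable_comparison_test)
  show "\<exists>N. \<forall>t\<ge>N. norm (\<gamma> ^ t * expect_t P \<pi> t f s) \<le> \<gamma> ^ t * (\<Sum>s'\<in>UNIV. \<bar>f s'\<bar>)"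
    using abs_expect_t_le[OF stochastic assms] discount_nonneg
    by (auto simp: abs_mult intro!: mult_left_mono)
  show "summable (\<lambda>t. \<gamma> ^ t * (\<Sum>s'\<in>UNIV. \<bar>f s'\<bar>))"
    by (intro summable_mult2 summable_geometric_discount)
qed

lemma suminf_weighted_disc_value:
  assumes "policy \<pi>"
  shows "(\<Sum>t. \<Sum>s1\<in>UNIV. w s1 * (\<gamma> ^ t * expect_t P \<pi> t f s1))
       = (\<Sum>s1\<in>UNIV. w s1 * disc_value P \<gamma> \<pi> f s1)"
  unfolding disc_value_def using summable_disc_value[OF assms]
  by (simp add: suminf_sum summable_mult suminf_mult)

lemma disc_value_bellman:
  assumes "policy \<pi>"
  shows "disc_value P \<gamma> \<pi> f s = f s + \<gamma> * (\<Sum>s1\<in>UNIV. Ppol P \<pi> s s1 * disc_value P \<gamma> \<pi> f s1)"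
proof -
  have "disc_value P \<gamma> \<pi> f s = f s + (\<Sum>t. \<gamma> ^ Suc t * expect_t P \<pi> (Suc t) f s)"
    unfolding disc_value_def using suminf_split_head[OF summable_disc_value[OF assms]] by simp
  also have "(\<Sum>t. \<gamma> ^ Suc t * expect_t P \<pi> (Suc t) f s)
      = (\<Sum>t. \<Sum>s1\<in>UNIV. (\<gamma> * Ppol P \<pi> s s1) * (\<gamma> ^ t * expect_t P \<pi> t f s1))"
    unfolding expect_t_Suc sum_distrib_left by (simp add: mult_ac)
  also have "\<dots> = \<gamma> * (\<Sum>s1\<in>UNIV. Ppol P \<pi> s s1 * disc_value P \<gamma> \<pi> f s1)"
    unfolding suminf_weighted_disc_value[OF assms] by (simp add: sum_distrib_left mult.assoc)
  finally show ?thesis .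
qed

lemma disc_value_add:
  assumes "policy \<pi>"
  shows "disc_value P \<gamma> \<pi> (\<lambda>x. f x + g x) s = disc_value P \<gamma> \<pi> f s + disc_value P \<gamma> \<pi> g s"
  unfolding disc_value_def expect_t_add distrib_left
  using summable_disc_value[OF assms] by (simp add: suminf_add)

lemma disc_value_mono:
  assumes "policy \<pi>" "\<And>x. f x \<le> g x"
  shows "disc_value P \<gamma> \<pi> f s \<le> disc_value P \<gamma> \<pi> g s"
  unfolding disc_value_def using discount_nonneg
  by (intro suminf_le summable_disc_value[OF assms(1)] mult_left_mono
      expect_t_mono[OF stochastic assms]) simp_all

lemma disc_value_const:
  assumes "policy \<pi>"
  shows "disc_value P \<gamma> \<pi> (\<lambda>_. k) s = k / (1 - \<gamma>)"
proof -
  have "disc_value P \<gamma> \<pi> (\<lambda>_. k) s = (\<Sum>t. \<gamma> ^ t) * k"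
    unfolding disc_value_def expect_t_const[OF stochastic assms]
    by (rule suminf_mult2[OF summable_geometric_discount, symmetric])
  then show ?thesis
    using discount_nonneg discount_less_1 by (simp add: suminf_geometric)
qed

(* gamma^t E_t[gamma P g - g] = gamma^(t+1) E_(t+1)[g] - gamma^t E_t[g] telescopes,
   and gamma^t E_t[g] tends to 0. *)
lemma disc_value_telescope:
  assumes "policy \<pi>"
  shows "disc_value P \<gamma> \<pi> (\<lambda>s'. \<gamma> * (\<Sum>s1\<in>UNIV. Ppol P \<pi> s' s1 * g s1) - g s') s = - g s"
proof -
  define E where "E t = \<gamma> ^ t * expect_t P \<pi> t g s" for t
  have "E \<longlonglongrightarrow> 0"
    unfolding E_def by (rule summable_LIMSEQ_zero[OF summable_disc_value[OF assms]])
  then have "(\<lambda>t. E (Suc t) - E t) sums (- g s)"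
    using telescope_sums[of E 0] by (simp add: E_def)
  moreover have "\<gamma> ^ t * expect_t P \<pi> t (\<lambda>s'. \<gamma> * (\<Sum>s1\<in>UNIV. Ppol P \<pi> s' s1 * g s1) - g s') s
      = E (Suc t) - E t" for t
    unfolding E_def expect_t_diff expect_t_cmult expect_t_Suc' by (simp add: algebra_simps)
  ultimately show ?thesis
    unfolding disc_value_def by (simp add: sums_iff)
qed

lemma Vf_bellman:
  assumes "policy \<pi>"
  shows "Vf P c h \<gamma> \<pi> s = cpol c h \<pi> s + \<gamma> * (\<Sum>s1\<in>UNIV. Ppol P \<pi> s s1 * Vf P c h \<gamma> \<pi> s1)"
  unfolding Vf_eq_disc_value by (rule disc_value_bellman[OF assms])

lemma Qf_eq:
  assumes "policy \<pi>"
  shows "Qf P c h \<gamma> \<pi> s a = c s a + h s (\<pi> s) + \<gamma> * (\<Sum>s1\<in>UNIV. P s a s1 * Vf P c h \<gamma> \<pi> s1)"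
proof -
  have "(\<Sum>t. \<gamma> ^ Suc t * (\<Sum>s1\<in>UNIV. P s a s1 * (\<Sum>s'\<in>UNIV. dist_t P \<pi> t s1 s' * cpol c h \<pi> s')))
      = (\<Sum>t. \<Sum>s1\<in>UNIV. (\<gamma> * P s a s1) * (\<gamma> ^ t * expect_t P \<pi> t (cpol c h \<pi>) s1))"
    unfolding expect_t_def sum_distrib_left by (simp add: mult_ac)
  also have "\<dots> = \<gamma> * (\<Sum>s1\<in>UNIV. P s a s1 * Vf P c h \<gamma> \<pi> s1)"
    unfolding suminf_weighted_disc_value[OF assms] Vf_eq_disc_value
    by (simp add: sum_distrib_left mult.assoc)
  finally show ?thesis unfolding Qf_def by simp
qed

lemma adv_psi_eq:
  assumes "policy \<pi>" "p \<in> act_simplex"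
  shows "adv_psi P c h \<gamma> \<pi> s p = (\<Sum>a\<in>UNIV. p a * c s a) + h s p
     + \<gamma> * (\<Sum>s1\<in>UNIV. (\<Sum>a\<in>UNIV. p a * P s a s1) * Vf P c h \<gamma> \<pi> s1) - Vf P c h \<gamma> \<pi> s"
proof -
  have "(\<Sum>a\<in>UNIV. Qf P c h \<gamma> \<pi> s a * p a)
      = (\<Sum>a\<in>UNIV. p a * c s a) + h s (\<pi> s) * (\<Sum>a\<in>UNIV. p a)
        + \<gamma> * (\<Sum>a\<in>UNIV. \<Sum>s1\<in>UNIV. p a * P s a s1 * Vf P c h \<gamma> \<pi> s1)"
  proof -
    have "Qf P c h \<gamma> \<pi> s a * p a = p a * c s a + h s (\<pi> s) * p a
        + \<gamma> * (\<Sum>s1\<in>UNIV. p a * P s a s1 * Vf P c h \<gamma> \<pi> s1)" for a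
      unfolding Qf_eq[OF assms(1)] by (simp add: algebra_simps sum_distrib_left)
    then show ?thesis by (simp add: sum.distrib sum_distrib_left)
  qed
  also have "(\<Sum>a\<in>UNIV. \<Sum>s1\<in>UNIV. p a * P s a s1 * Vf P c h \<gamma> \<pi> s1)
      = (\<Sum>s1\<in>UNIV. (\<Sum>a\<in>UNIV. p a * P s a s1) * Vf P c h \<gamma> \<pi> s1)"
    unfolding sum_distrib_right by (rule sum.swap)
  finally show ?thesis
    using assms(2) unfolding adv_psi_def act_simplex_def by simp
qed

lemma adv_psi_policy:
  assumes "policy \<pi>" "policy \<pi>'"
  shows "adv_psi P c h \<gamma> \<pi> s (\<pi>' s)
       = cpol c h \<pi>' s + (\<gamma> * (\<Sum>s1\<in>UNIV. Ppol P \<pi>' s s1 * Vf P c h \<gamma> \<pi> s1) - Vf P c h \<gamma> \<pi> s)"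
  using adv_psi_eq[OF assms(1), of "\<pi>' s"] assms(2)
  by (simp add: policy_def cpol_def Ppol_def)

lemma adv_psi_self:
  assumes "policy \<pi>"
  shows "adv_psi P c h \<gamma> \<pi> s (\<pi> s) = 0"
  using adv_psi_policy[OF assms assms, of c h s] Vf_bellman[OF assms, of c h s] by linarith

lemma performance_difference:
  assumes "policy \<pi>" "policy \<pi>'"
  shows "Vf P c h \<gamma> \<pi>' s - Vf P c h \<gamma> \<pi> s
       = disc_value P \<gamma> \<pi>' (\<lambda>s'. adv_psi P c h \<gamma> \<pi> s' (\<pi>' s')) s"
  unfolding adv_psi_policy[OF assms] disc_value_add[OF assms(2)]
    disc_value_telescope[OF assms(2)] Vf_eq_disc_value[of _ _ _ _ \<pi>']
  by simp

lemma Vf_update_le_adv_psi: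
  assumes "policy \<pi>" "p \<in> act_simplex" and nonpos: "adv_psi P c h \<gamma> \<pi> s p \<le> 0"
  shows "Vf P c h \<gamma> (\<pi>(s := p)) s - Vf P c h \<gamma> \<pi> s \<le> adv_psi P c h \<gamma> \<pi> s p"
proof -
  define \<pi>' where "\<pi>' = \<pi>(s := p)"
  define \<phi> where "\<phi> s' = (if s' = s then adv_psi P c h \<gamma> \<pi> s p else 0)" for s'
  have policy': "policy \<pi>'"
    using assms(1,2) unfolding \<pi>'_def policy_def by simp
  have adv_\<phi>: "(\<lambda>s'. adv_psi P c h \<gamma> \<pi> s' (\<pi>' s')) = \<phi>"
    by (auto simp: \<pi>'_def \<phi>_def adv_psi_self[OF assms(1)])
  have "disc_value P \<gamma> \<pi>' \<phi> s1 \<le> 0" for s1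
    using disc_value_mono[OF policy', of \<phi> "\<lambda>_. 0" s1] nonpos
    by (simp add: \<phi>_def disc_value_const[OF policy'])
  then have "\<gamma> * (\<Sum>s1\<in>UNIV. Ppol P \<pi>' s s1 * disc_value P \<gamma> \<pi>' \<phi> s1) \<le> 0"
    using discount_nonneg Ppol_nonneg[OF stochastic policy']
    by (intro mult_nonneg_nonpos sum_nonpos mult_nonneg_nonpos) auto
  then have "disc_value P \<gamma> \<pi>' \<phi> s \<le> adv_psi P c h \<gamma> \<pi> s p"
    unfolding disc_value_bellman[OF policy', of \<phi> s] by (simp add: \<phi>_def)
  then show ?thesis
    using performance_difference[OF assms(1) policy'] adv_\<phi> by (simp add: \<pi>'_def)
qed

lemma neg_adv_psi_le_suboptimality:
  assumes "policy \<pi>" "p \<in> act_simplex"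
    and opt: "\<And>\<pi>' s. policy \<pi>' \<Longrightarrow> Vf P c h \<gamma> \<pi>_opt s \<le> Vf P c h \<gamma> \<pi>' s"
  shows "- adv_psi P c h \<gamma> \<pi> s p \<le> Vf P c h \<gamma> \<pi> s - Vf P c h \<gamma> \<pi>_opt s"
proof (cases "adv_psi P c h \<gamma> \<pi> s p \<le> 0")
  case True
  have "policy (\<pi>(s := p))"
    using assms(1,2) unfolding policy_def by simp
  from opt[OF this, of s] show ?thesis
    using Vf_update_le_adv_psi[OF assms(1,2) True] by simp
next
  case False
  then show ?thesis using opt[OF assms(1), of s] by linarith
qed

lemma adv_gap_le_suboptimality:
  assumes "policy \<pi>"
    and opt: "\<And>\<pi>' s. policy \<pi>' \<Longrightarrow> Vf P c h \<gamma> \<pi>_opt s \<le> Vf P c h \<gamma> \<pi>' s"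
  shows "adv_gap P c h \<gamma> \<pi> s \<le> Vf P c h \<gamma> \<pi> s - Vf P c h \<gamma> \<pi>_opt s"
  unfolding adv_gap_def
  using act_simplex_nonempty neg_adv_psi_le_suboptimality[OF assms(1) _ opt]
  by (rule cSUP_least)

lemma neg_adv_psi_le_adv_gap:
  assumes "policy \<pi>" "p \<in> act_simplex"
    and opt: "\<And>\<pi>' s. policy \<pi>' \<Longrightarrow> Vf P c h \<gamma> \<pi>_opt s \<le> Vf P c h \<gamma> \<pi>' s"
  shows "- adv_psi P c h \<gamma> \<pi> s p \<le> adv_gap P c h \<gamma> \<pi> s"
  unfolding adv_gap_def
proof (rule cSUP_upper[OF assms(2)])
  show "bdd_above ((\<lambda>p. - adv_psi P c h \<gamma> \<pi> s p) ` act_simplex)"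
    using neg_adv_psi_le_suboptimality[OF assms(1) _ opt] by (intro bdd_aboveI2)
qed

lemma suboptimality_le_Max_adv_gap:
  assumes "policy \<pi>" "policy \<pi>_opt"
    and opt: "\<And>\<pi>' s. policy \<pi>' \<Longrightarrow> Vf P c h \<gamma> \<pi>_opt s \<le> Vf P c h \<gamma> \<pi>' s"
  shows "Vf P c h \<gamma> \<pi> s - Vf P c h \<gamma> \<pi>_opt s \<le> (1 / (1 - \<gamma>)) * Max (range (adv_gap P c h \<gamma> \<pi>))"
proof -
  define M where "M = Max (range (adv_gap P c h \<gamma> \<pi>))"
  have adv_lower: "- M \<le> adv_psi P c h \<gamma> \<pi> s' (\<pi>_opt s')" for s'
  proof -
    have "adv_gap P c h \<gamma> \<pi> s' \<le> M"
      unfolding M_def by (rule Max_ge) simp_all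
    moreover have "\<pi>_opt s' \<in> act_simplex"
      using assms(2) by (simp add: policy_def)
    from neg_adv_psi_le_adv_gap[OF assms(1) this opt]
    have "- adv_psi P c h \<gamma> \<pi> s' (\<pi>_opt s') \<le> adv_gap P c h \<gamma> \<pi> s'" .
    ultimately show ?thesis by linarith
  qed
  have "- M / (1 - \<gamma>) = disc_value P \<gamma> \<pi>_opt (\<lambda>_. - M) s"
    by (simp add: disc_value_const[OF assms(2)])
  also have "\<dots> \<le> disc_value P \<gamma> \<pi>_opt (\<lambda>s'. adv_psi P c h \<gamma> \<pi> s' (\<pi>_opt s')) s"
    using assms(2) adv_lower by (rule disc_value_mono)
  also have "\<dots> = Vf P c h \<gamma> \<pi>_opt s - Vf P c h \<gamma> \<pi> s"
    by (rule performance_difference[OF assms(1,2), symmetric])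
  finally show ?thesis
    unfolding M_def[symmetric] by simp
qed

end

theorem proposition2p2:
  fixes P :: "'s::finite \<Rightarrow> 'a::finite \<Rightarrow> 's \<Rightarrow> real"
    and c :: "'s \<Rightarrow> 'a \<Rightarrow> real"
    and h :: "'s \<Rightarrow> ('a \<Rightarrow> real) \<Rightarrow> real"
    and \<gamma> :: real
    and \<pi> \<pi>_opt :: "'s \<Rightarrow> 'a \<Rightarrow> real"
  assumes "stochastic P"
    and "0 \<le> \<gamma>" and "\<gamma> < 1"
    and "\<And>s. closed_convex_on_simplex (h s)"
    and "policy \<pi>_opt"
    and "\<And>\<pi>' s. policy \<pi>' \<Longrightarrow> Vf P c h \<gamma> \<pi>_opt s \<le> Vf P c h \<gamma> \<pi>' s"
    and "policy \<pi>"
  shows "adv_gap P c h \<gamma> \<pi> s \<le> Vf P c h \<gamma> \<pi> s - Vf P c h \<gamma> \<pi>_opt s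
       \<and> Vf P c h \<gamma> \<pi> s - Vf P c h \<gamma> \<pi>_opt s \<le> (1 / (1 - \<gamma>)) * Max (range (adv_gap P c h \<gamma> \<pi>))"
proof -
  interpret discounted_mdp P \<gamma>
    using assms(1-3) by unfold_locales
  show ?thesis
    using adv_gap_le_suboptimality[OF assms(7,6)] suboptimality_le_Max_adv_gap[OF assms(7,5,6)]
    by (rule conjI)
qed

end
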